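(* Fix $\rho>0$, integers $M\ge N\ge1$ and scalars $c_0,\dots,c_{N-1}>0$. Then for all $A\in\mathbb{P}_N(\overline{D}(0,\rho))$, $$A^{\circ M}\le\mathcal{C}(\mathbf{c};z^M;N,\rho)\cdot\bigl(c_0\mathbf{1}_{N\times N}+c_1A+\cdots+c_{N-1}A^{\circ(N-1)}\bigr)$$ in the Loewner order. Moreover the constant $\mathcal{C}(\mathbf{c};z^M;N,\rho)$ is sharp: it is the smallest constant for which this inequality holds for all such $A$.
   Context: $\mathbb{P}_N(\overline{D}(0,\rho))$ is the set of $N\times N$ Hermitian positive semidefinite matrices with entries in the closed disc of radius $\rho$ about $0$. $A^{\circ n}$ is the entrywise $n$-th power; $\mathbf{1}_{N\times N}$ is the all-ones matrix. $B\le C$ means $C-B$ is positive semidefinite. For $\mathbf{c}=(c_0,\dots,c_{N-1})$ with $c_j>0$ and $M\ge N$, $\mathcal{C}(\mathbf{c};z^M;N,\rho):=\sum_{j=0}^{N-1}\binom{M}{j}^2\binom{M-j-1}{N-j-1}^2\rho^{M-j}/c_j$. *)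

theory Defs
  imports Complex_Main
begin

text \<open>N x N complex matrices are represented as functions nat \<Rightarrow> nat \<Rightarrow> complex;
  only entries with indices i, j < N are relevant.\<close>

definition hermitian :: "nat \<Rightarrow> (nat \<Rightarrow> nat \<Rightarrow> complex) \<Rightarrow> bool" where
  "hermitian N A \<longleftrightarrow> (\<forall>i<N. \<forall>j<N. A j i = cnj (A i j))"

definition psd :: "nat \<Rightarrow> (nat \<Rightarrow> nat \<Rightarrow> complex) \<Rightarrow> bool" where
  "psd N A \<longleftrightarrow> hermitian N A \<and>
     (\<forall>v :: nat \<Rightarrow> complex. 0 \<le> Re (\<Sum>i<N. \<Sum>j<N. cnj (v i) * A i j * v j))"

definition loewner_le :: "nat \<Rightarrow> (nat \<Rightarrow> nat \<Rightarrow> complex) \<Rightarrow> (nat \<Rightarrow> nat \<Rightarrow> complex) \<Rightarrow> bool" where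
  "loewner_le N B C \<longleftrightarrow> psd N (\<lambda>i j. C i j - B i j)"

definition PN :: "nat \<Rightarrow> real \<Rightarrow> (nat \<Rightarrow> nat \<Rightarrow> complex) \<Rightarrow> bool" where
  "PN N \<rho> A \<longleftrightarrow> psd N A \<and> (\<forall>i<N. \<forall>j<N. cmod (A i j) \<le> \<rho>)"

text \<open>Entrywise (Hadamard) power; hpow A 0 is the all-ones matrix.\<close>
definition hpow :: "(nat \<Rightarrow> nat \<Rightarrow> complex) \<Rightarrow> nat \<Rightarrow> (nat \<Rightarrow> nat \<Rightarrow> complex)" where
  "hpow A n = (\<lambda>i j. (A i j) ^ n)"

definition Cconst :: "(nat \<Rightarrow> real) \<Rightarrow> nat \<Rightarrow> nat \<Rightarrow> real \<Rightarrow> real" where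
  "Cconst c M N \<rho> = (\<Sum>j<N. real (M choose j) ^ 2 * real ((M - j - 1) choose (N - j - 1)) ^ 2
       * \<rho> ^ (M - j) / c j)"

definition rhs :: "nat \<Rightarrow> (nat \<Rightarrow> real) \<Rightarrow> real \<Rightarrow> (nat \<Rightarrow> nat \<Rightarrow> complex) \<Rightarrow> (nat \<Rightarrow> nat \<Rightarrow> complex)" where
  "rhs N c t A = (\<lambda>i j. complex_of_real t * (\<Sum>k<N. complex_of_real (c k) * hpow A k i j))"

end

theory Submission
  imports Defs "HOL-Analysis.Convex" "HOL-Computational_Algebra.Polynomial"
begin

text \<open>The upper bound is proved by induction on \<open>N\<close>, in the manner of FitzGerald and Horn.
  Write \<open>A = z z\<^sup>* + B\<close> with \<open>B\<close> positive semidefinite and vanishing outside the leading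
  \<open>(N - 1) \<times> (N - 1)\<close> block, and integrate the entrywise derivative of
  \<open>f(w) = \<Sum>\<^sub>k\<^sub><\<^sub>N c\<^sub>k w\<^sup>k - w\<^sup>M\<close> along the segment from \<open>z z\<^sup>*\<close> to \<open>A\<close>. That derivative is
  \<open>M\<close> times a function of the same shape for \<open>N - 1\<close> and \<open>M - 1\<close>, whose constant does not
  exceed the original one, so the Schur product theorem closes the induction.

  At the rank-one endpoint, reducing \<open>w\<^sup>M\<close> modulo \<open>\<Prod>\<^sub>i (w - z\<^sub>i)\<close> writes the moment
  \<open>\<gamma>\<^sub>M = \<Sum>\<^sub>i v\<^sub>i\<^sup>* z\<^sub>i\<^sup>M\<close> as \<open>\<Sum>\<^sub>k\<^sub><\<^sub>N \<beta>\<^sub>k \<gamma>\<^sub>k\<close>. Up to sign the \<open>\<beta>\<^sub>k\<close> are hook Schur polynomials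
  in the \<open>z\<^sub>i\<close>, so \<open>|\<beta>\<^sub>k|\<close> is at most their value at the constant list \<open>\<surd>\<rho>\<close>, and Cauchy--Schwarz
  gives the inequality with exactly the constant \<open>\<C>\<close>. Conversely, for distinct \<open>z\<^sub>i\<close> a Vandermonde
  system yields \<open>v\<close> with \<open>\<gamma>\<^sub>k = \<beta>\<^sub>k\<^sup>* / c\<^sub>k\<close>, turning Cauchy--Schwarz into an equality; letting
  the \<open>z\<^sub>i\<close> tend to \<open>\<surd>\<rho>\<close> shows that no smaller constant works.\<close>

section \<open>Symmetric polynomials of a list\<close>

fun esym :: "nat \<Rightarrow> 'a::comm_ring_1 list \<Rightarrow> 'a" where
  "esym b [] = (if b = 0 then 1 else 0)"
| "esym b (x # xs) = esym b xs + (if b = 0 then 0 else x * esym (b - 1) xs)"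

fun hsym :: "nat \<Rightarrow> 'a::comm_ring_1 list \<Rightarrow> 'a" where
  "hsym m [] = (if m = 0 then 1 else 0)"
| "hsym m (x # xs) = (\<Sum>j\<le>m. x ^ j * hsym (m - j) xs)"

text \<open>The Schur polynomial of the hook partition \<open>(a, 1\<^sup>b)\<close>, expanded along the first variable
  carrying the corner of the hook.\<close>
fun hook_schur :: "nat \<Rightarrow> nat \<Rightarrow> 'a::comm_ring_1 list \<Rightarrow> 'a" where
  "hook_schur a b [] = 0"
| "hook_schur a b (x # xs) = hook_schur a b xs + x * hsym (a - 1) (x # xs) * esym b xs"

lemma esym_0 [simp]: "esym 0 xs = 1"
  by (induction xs) auto

lemma esym_eq_0: "length xs < b \<Longrightarrow> esym b xs = 0"
  by (induction xs arbitrary: b) auto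

lemma hsym_0 [simp]: "hsym 0 xs = 1"
  by (induction xs) auto

lemma hsym_Cons_Suc: "hsym (Suc m) (x # xs) = hsym (Suc m) xs + x * hsym m (x # xs)"
proof -
  have "hsym (Suc m) (x # xs) = hsym (Suc m) xs + (\<Sum>j\<le>m. x ^ Suc j * hsym (m - j) xs)"
    by (subst hsym.simps, subst sum.atMost_Suc_shift) simp
  also have "(\<Sum>j\<le>m. x ^ Suc j * hsym (m - j) xs) = x * hsym m (x # xs)"
    by (simp add: sum_distrib_left mult.assoc)
  finally show ?thesis .
qed

declare hsym.simps(2) [simp del]

lemma hook_schur_1: "hook_schur 1 b xs = esym (Suc b) xs"
  by (induction xs) auto

lemma hook_schur_0: "1 \<le> a \<Longrightarrow> hook_schur a 0 xs = hsym a xs"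
  by (induction xs) (auto simp: hsym_Cons_Suc dest!: Suc_le_D)

lemma hook_schur_eq_0: "length xs \<le> b \<Longrightarrow> hook_schur a b xs = 0"
  by (induction xs) (auto simp: esym_eq_0)

lemma hsym_mult_esym:
  "1 \<le> a \<Longrightarrow> hsym a xs * esym (Suc b) xs = hook_schur (Suc a) b xs + hook_schur a (Suc b) xs"
proof (induction xs)
  case (Cons x xs)
  then obtain m where a: "a = Suc m" by (cases a) auto
  have "hook_schur (Suc a) b (x # xs) + hook_schur a (Suc b) (x # xs)
      = (hook_schur (Suc a) b xs + hook_schur a (Suc b) xs)
        + x * hsym a (x # xs) * esym b xs + x * hsym m (x # xs) * esym (Suc b) xs"
    by (simp add: a algebra_simps)
  also have "\<dots> = hsym a (x # xs) * esym (Suc b) (x # xs)"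
    using Cons by (simp add: a hsym_Cons_Suc algebra_simps)
  finally show ?case ..
qed simp

lemma esym_replicate: "esym b (replicate n x) = of_nat (n choose b) * x ^ b"
proof (induction n arbitrary: b)
  case (Suc n)
  then show ?case by (cases b) (auto simp: algebra_simps)
qed (simp add: binomial_eq_0)

lemma hsym_replicate: "hsym m (replicate n x) = of_nat ((n + m - 1) choose m) * x ^ m"
proof (induction n arbitrary: m)
  case 0
  then show ?case by (cases m) (auto simp: binomial_eq_0)
next
  case (Suc n)
  note IH_n = Suc.IH
  show ?case
  proof (induction m)
    case (Suc m)
    have "hsym (Suc m) (replicate (Suc n) x)
        = hsym (Suc m) (replicate n x) + x * hsym m (replicate (Suc n) x)"
      by (simp add: hsym_Cons_Suc)
    also have "\<dots> = of_nat (((n + m) choose Suc m) + ((n + m) choose m)) * x ^ Suc m"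
      using Suc.IH IH_n[of "Suc m"] by (simp add: algebra_simps)
    finally show ?case by (simp add: add.commute)
  qed simp
qed

lemma binomial_mult_binomial_shift:
  "(n + a choose (a + b)) * ((a + b) choose b) = (n + a choose a) * (n choose b)"
proof (cases "b \<le> n")
  case True
  have "(n + a choose (a + b)) * ((a + b) choose a) = (n + a choose a) * (n choose b)"
    using choose_mult[of a "a + b" "n + a"] True by simp
  then show ?thesis
    by (metis add_diff_cancel_left' binomial_symmetric le_add1)
qed (simp add: binomial_eq_0)

lemma hook_schur_replicate:
  assumes "1 \<le> a"
  shows "hook_schur a b (replicate n x)
       = of_nat (((n + a - 1) choose (a + b)) * ((a + b - 1) choose b)) * x ^ (a + b)"
proof (induction n)
  case 0
  show ?case using assms by (simp add: binomial_eq_0)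
next
  case (Suc n)
  obtain m where a: "a = Suc m" using assms by (cases a) auto
  have h: "hsym m (x # replicate n x) = of_nat ((n + m) choose m) * x ^ m"
    using hsym_replicate[of m "Suc n" x] by simp
  have "hook_schur a b (replicate (Suc n) x)
      = hook_schur a b (replicate n x) + x * hsym m (x # replicate n x) * esym b (replicate n x)"
    by (simp add: a)
  also have "\<dots> = of_nat (((n + m) choose Suc (m + b)) * ((m + b) choose b)
                          + ((n + m) choose m) * (n choose b)) * x ^ (a + b)"
    using Suc.IH by (simp add: h esym_replicate a algebra_simps power_add)
  also have "((n + m) choose Suc (m + b)) * ((m + b) choose b) + ((n + m) choose m) * (n choose b)
      = ((Suc n + a - 1) choose (a + b)) * ((a + b - 1) choose b)"
    using binomial_mult_binomial_shift[of n m b] by (simp add: a algebra_simps)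
  finally show ?case .
qed

lemma esym_nonneg: "\<forall>y\<in>set xs. (0::real) \<le> y \<Longrightarrow> 0 \<le> esym b xs"
  by (induction xs arbitrary: b) auto

lemma hsym_nonneg: "\<forall>y\<in>set xs. (0::real) \<le> y \<Longrightarrow> 0 \<le> hsym m xs"
  by (induction xs arbitrary: m) (auto simp: hsym.simps(2) intro!: sum_nonneg)

lemma norm_esym_le:
  "\<forall>y\<in>set u. norm y \<le> r \<Longrightarrow> 0 \<le> r \<Longrightarrow> norm (esym b (u::'a::real_normed_field list)) \<le> esym b (replicate (length u) r)"
proof (induction u arbitrary: b)
  case (Cons x xs)
  have "norm (esym b (x # xs)) \<le> norm (esym b xs) + (if b = 0 then 0 else norm x * norm (esym (b - 1) xs))"
    by (auto intro: norm_triangle_ineq[THEN order_trans] simp: norm_mult)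
  also have "\<dots> \<le> esym b (replicate (length xs) r)
                     + (if b = 0 then 0 else r * esym (b - 1) (replicate (length xs) r))"
    using Cons by (auto intro!: add_mono mult_mono esym_nonneg)
  finally show ?case by simp
qed simp

lemma norm_hsym_le:
  "\<forall>y\<in>set u. norm y \<le> r \<Longrightarrow> 0 \<le> r \<Longrightarrow> norm (hsym m (u::'a::real_normed_field list)) \<le> hsym m (replicate (length u) r)"
proof (induction u arbitrary: m)
  case (Cons x xs)
  have "norm (hsym m (x # xs)) \<le> (\<Sum>j\<le>m. norm x ^ j * norm (hsym (m - j) xs))"
    by (simp add: hsym.simps(2)) (rule order_trans[OF norm_sum], simp add: norm_mult norm_power)
  also have "\<dots> \<le> (\<Sum>j\<le>m. r ^ j * hsym (m - j) (replicate (length xs) r))"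
    using Cons by (auto intro!: sum_mono mult_mono power_mono hsym_nonneg)
  finally show ?case by (simp add: hsym.simps(2))
qed simp

lemma norm_hook_schur_le:
  "\<forall>y\<in>set u. norm y \<le> r \<Longrightarrow> 0 \<le> r
   \<Longrightarrow> norm (hook_schur a b (u::'a::real_normed_field list)) \<le> hook_schur a b (replicate (length u) r)"
proof (induction u)
  case (Cons x xs)
  have h: "norm (hsym (a - 1) (x # xs)) \<le> hsym (a - 1) (replicate (Suc (length xs)) r)"
    using norm_hsym_le[OF Cons.prems] by simp
  have e: "norm (esym b xs) \<le> esym b (replicate (length xs) r)"
    using norm_esym_le Cons.prems by auto
  have "norm (hook_schur a b (x # xs))
      \<le> norm (hook_schur a b xs) + norm x * norm (hsym (a - 1) (x # xs)) * norm (esym b xs)"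
    by (auto intro: norm_triangle_ineq[THEN order_trans] simp: norm_mult)
  also have "\<dots> \<le> hook_schur a b (replicate (length xs) r)
                  + r * hsym (a - 1) (replicate (Suc (length xs)) r) * esym b (replicate (length xs) r)"
    using Cons h e by (auto intro!: add_mono mult_mono esym_nonneg hsym_nonneg mult_nonneg_nonneg)
  finally show ?case by simp
qed simp

section \<open>Reducing powers modulo a polynomial with prescribed roots\<close>

definition vieta_coeff :: "'a::comm_ring_1 list \<Rightarrow> nat \<Rightarrow> 'a" where
  "vieta_coeff u k = (if k \<le> length u then (-1) ^ (length u - k) * esym (length u - k) u else 0)"

lemma vieta_coeff_Cons: "vieta_coeff (y # u) k = (if k = 0 then 0 else vieta_coeff u (k - 1)) - y * vieta_coeff u k"
proof -
  consider "k = 0" | "0 < k" "k \<le> length u" | "k = Suc (length u)" | "k > Suc (length u)"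
    by linarith
  then show ?thesis
  proof cases
    case 2
    then obtain j where "length u - k = j" "length u - (k - 1) = Suc j" by auto
    with 2 show ?thesis by (auto simp: vieta_coeff_def Suc_diff_le algebra_simps)
  qed (auto simp: vieta_coeff_def esym_eq_0)
qed

lemma sum_vieta_coeff: "(\<Sum>k\<le>length u. vieta_coeff u k * x ^ k) = (\<Prod>y\<leftarrow>u. x - y)"
proof (induction u)
  case (Cons y u)
  let ?n = "length u"
  have "(\<Sum>k\<le>length (y # u). vieta_coeff (y # u) k * x ^ k)
      = (\<Sum>k\<le>Suc ?n. (if k = 0 then 0 else vieta_coeff u (k - 1)) * x ^ k)
        - y * (\<Sum>k\<le>Suc ?n. vieta_coeff u k * x ^ k)"
    by (simp add: vieta_coeff_Cons sum_subtractf sum_distrib_left algebra_simps)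
  also have "(\<Sum>k\<le>Suc ?n. (if k = 0 then 0 else vieta_coeff u (k - 1)) * x ^ k)
      = x * (\<Sum>k\<le>?n. vieta_coeff u k * x ^ k)"
    by (subst sum.atMost_Suc_shift) (simp add: sum_distrib_left algebra_simps)
  also have "(\<Sum>k\<le>Suc ?n. vieta_coeff u k * x ^ k) = (\<Sum>k\<le>?n. vieta_coeff u k * x ^ k)"
    by (simp add: vieta_coeff_def)
  finally show ?case using Cons by (simp add: algebra_simps)
qed (simp add: vieta_coeff_def)

lemma power_length_eq_vieta: 
  assumes "x \<in> set u"
  shows "x ^ length u = - (\<Sum>k<length u. vieta_coeff u k * x ^ k)"
proof -
  have "(\<Prod>y\<leftarrow>u. x - y) = 0"
    using assms by (induction u) auto
  then have "(\<Sum>k<length u. vieta_coeff u k * x ^ k) + x ^ length u = 0"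
    unfolding sum_vieta_coeff[symmetric] lessThan_Suc_atMost[symmetric]
    by (simp add: vieta_coeff_def)
  then show ?thesis by (simp add: add_eq_0_iff)
qed

text \<open>The coefficients of the remainder of \<open>x\<^sup>M\<close> modulo \<open>\<Prod>y\<leftarrow>u. x - y\<close>: multiply the
  previous remainder by \<open>x\<close> and eliminate its top coefficient with the monic relation.\<close>
fun pow_mod_coeff :: "'a::comm_ring_1 list \<Rightarrow> nat \<Rightarrow> nat \<Rightarrow> 'a" where
  "pow_mod_coeff u 0 k = (if k = 0 then 1 else 0)"
| "pow_mod_coeff u (Suc M) k =
     (if k = 0 then 0 else pow_mod_coeff u M (k - 1)) - pow_mod_coeff u M (length u - 1) * vieta_coeff u k"

lemma power_eq_pow_mod_coeff:
  assumes "x \<in> set u"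
  shows "x ^ M = (\<Sum>k<length u. pow_mod_coeff u M k * x ^ k)"
proof (induction M)
  case 0
  obtain m where n: "length u = Suc m" using assms by (cases u) auto
  show ?case by (simp add: n lessThan_Suc_eq_insert_0 sum.reindex)
next
  case (Suc M)
  obtain m where n: "length u = Suc m" using assms by (cases u) auto
  let ?\<beta> = "pow_mod_coeff u M"
  have "x ^ Suc M = (\<Sum>k<m. ?\<beta> k * x ^ Suc k) + ?\<beta> m * x ^ length u"
    using Suc by (simp add: n sum_distrib_left algebra_simps)
  also have "(\<Sum>k<m. ?\<beta> k * x ^ Suc k) = (\<Sum>k<length u. (if k = 0 then 0 else ?\<beta> (k - 1)) * x ^ k)"
    by (simp add: n lessThan_Suc_eq_insert_0 sum.reindex)
  also have "?\<beta> m * x ^ length u = - (\<Sum>k<length u. ?\<beta> m * vieta_coeff u k * x ^ k)"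
    by (simp add: power_length_eq_vieta[OF assms] sum_distrib_left mult.assoc)
  finally show ?case
    by (simp add: n sum_subtractf[symmetric] algebra_simps del: sum.lessThan_Suc)
qed

lemma pow_mod_coeff_small: "M < length u \<Longrightarrow> pow_mod_coeff u M k = (if k = M then 1 else 0)"
  by (induction M arbitrary: k) auto

lemma pow_mod_coeff_length: "k < length u \<Longrightarrow> pow_mod_coeff u (length u) k = - vieta_coeff u k"
  by (cases "length u") (auto simp: pow_mod_coeff_small)

lemma pow_mod_coeff_hook_schur:
  assumes "1 \<le> length u" "length u \<le> M" "k < length u"
  shows "pow_mod_coeff u M k = (-1) ^ (length u - 1 - k) * hook_schur (M - length u + 1) (length u - 1 - k) u"
  using assms(2,3)
proof (induction M arbitrary: k rule: dec_induct)
  case base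
  then obtain b where b: "length u - k = Suc b" "length u - Suc k = b"
    by (metis Suc_diff_Suc diff_Suc_1 diff_commute zero_less_diff)
  show ?case
    using base hook_schur_1[of b u] by (simp add: pow_mod_coeff_length vieta_coeff_def b)
next
  case (step M)
  let ?n = "length u"
  define a where "a = M - ?n + 1"
  have a1: "1 \<le> a" and aS: "Suc M - ?n + 1 = Suc a" using step by (auto simp: a_def)
  obtain m where n: "?n = Suc m" using assms(1) by (cases ?n) auto
  have "pow_mod_coeff u M m = hook_schur a 0 u"
    using step.IH[of m] unfolding a_def by (simp add: n)
  then have top: "pow_mod_coeff u M m = hsym a u"
    by (simp add: hook_schur_0[OF a1])
  show ?case
  proof (cases k)
    case 0
    have "M - m = a" using step n by (simp add: a_def)
    moreover have "hook_schur (Suc a) m u = hsym a u * esym (Suc m) u"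
      using hsym_mult_esym[OF a1, of u m] hook_schur_eq_0[of u "Suc m" a] n by simp
    ultimately show ?thesis
      using top by (simp add: 0 aS n vieta_coeff_def)
  next
    case (Suc j)
    then obtain b where b: "?n - k = Suc b" "?n - 1 - k = b" "?n - 1 - j = Suc b"
      using step.prems n by (metis Suc_diff_Suc diff_Suc_1 diff_Suc_Suc)
    have "pow_mod_coeff u (Suc M) k = pow_mod_coeff u M j - hsym a u * vieta_coeff u k"
      by (simp add: Suc n top)
    also have "\<dots> = (-1) ^ b * (hsym a u * esym (Suc b) u - hook_schur a (Suc b) u)"
      using step.IH[of j] step.prems Suc b by (simp add: a_def vieta_coeff_def algebra_simps)
    also have "\<dots> = (-1) ^ b * hook_schur (Suc a) b u"
      using hsym_mult_esym[OF a1, of u b] by simp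
    finally show ?thesis by (simp only: b aS)
  qed
qed

lemma norm_pow_mod_coeff_replicate:
  assumes "1 \<le> n" "n \<le> M" "k < n"
  shows "norm (pow_mod_coeff (replicate n x) M k)
       = real ((M choose k) * ((M - k - 1) choose (n - k - 1))) * norm (x::'a::real_normed_field) ^ (M - k)"
proof -
  have e: "n + (M - n + 1) - 1 = M" "M - n + 1 + (n - 1 - k) = M - k"
    using assms by auto
  have "hook_schur (M - n + 1) (n - 1 - k) (replicate n x)
      = of_nat ((M choose (M - k)) * ((M - k - 1) choose (n - 1 - k))) * x ^ (M - k)"
    using hook_schur_replicate[of "M - n + 1" "n - 1 - k" n x, unfolded e] by simp
  moreover have "M choose (M - k) = M choose k"
    using assms by (simp add: binomial_symmetric[symmetric])
  ultimately show ?thesis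
    using pow_mod_coeff_hook_schur[of "replicate n x" M k] assms
    by (simp add: norm_mult norm_power)
qed

lemma norm_pow_mod_coeff_le:
  fixes u :: "'a::real_normed_field list"
  assumes "1 \<le> length u" "length u \<le> M" "k < length u" "\<forall>y\<in>set u. norm y \<le> r" "0 \<le> r"
  shows "norm (pow_mod_coeff u M k) \<le> norm (pow_mod_coeff (replicate (length u) (of_real r :: 'a)) M k)"
proof -
  let ?n = "length u" and ?r = "replicate (length u) (of_real r :: 'a)"
  have "norm (pow_mod_coeff u M k) = norm (hook_schur (M - ?n + 1) (?n - 1 - k) u)"
    using pow_mod_coeff_hook_schur[OF assms(1-3)] by (simp add: norm_mult norm_power)
  also have "\<dots> \<le> hook_schur (M - ?n + 1) (?n - 1 - k) (replicate ?n r)"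
    using norm_hook_schur_le assms(4,5) by blast
  also have "\<dots> = norm (hook_schur (M - ?n + 1) (?n - 1 - k) ?r)"
    using assms(5) by (simp add: hook_schur_replicate norm_mult norm_power)
  also have "\<dots> = norm (pow_mod_coeff ?r M k)"
    using pow_mod_coeff_hook_schur[of ?r M k] assms(1-3) by (simp add: norm_mult norm_power)
  finally show ?thesis .
qed

lemma continuous_esym:
  fixes g :: "'b::t2_space \<Rightarrow> nat \<Rightarrow> 'a::real_normed_field"
  assumes "\<And>i. continuous F (\<lambda>e. g e i)"
  shows "continuous F (\<lambda>e. esym b (map (g e) xs))"
proof (induction xs arbitrary: b)
  case (Cons i xs)
  then show ?case
    by (cases b) (auto intro!: continuous_intros assms)
qed simp

lemma continuous_pow_mod_coeff:
  fixes g :: "'b::t2_space \<Rightarrow> nat \<Rightarrow> 'a::real_normed_field"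
  assumes "\<And>i. continuous F (\<lambda>e. g e i)"
  shows "continuous F (\<lambda>e. pow_mod_coeff (map (g e) xs) M k)"
proof (induction M arbitrary: k)
  case (Suc M)
  have "continuous F (\<lambda>e. vieta_coeff (map (g e) xs) j)" for j
    unfolding vieta_coeff_def length_map
    by (cases "j \<le> length xs") (auto intro!: continuous_intros continuous_esym assms)
  with Suc show ?case
    by (cases k) (auto intro!: continuous_intros)
qed simp

section \<open>Positive semidefinite matrices\<close>

definition qform :: "nat \<Rightarrow> (nat \<Rightarrow> nat \<Rightarrow> complex) \<Rightarrow> (nat \<Rightarrow> complex) \<Rightarrow> complex" where
  "qform n A v = (\<Sum>i<n. \<Sum>j<n. cnj (v i) * A i j * v j)"

lemma psd_iff_qform: "psd n A \<longleftrightarrow> hermitian n A \<and> (\<forall>v. 0 \<le> Re (qform n A v))"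
  by (simp add: psd_def qform_def)

lemma psd_hermitian: "psd n A \<Longrightarrow> i < n \<Longrightarrow> j < n \<Longrightarrow> A j i = cnj (A i j)"
  unfolding psd_def hermitian_def by blast

lemma psd_diag_real:
  assumes "psd n A" "i < n"
  shows "A i i = complex_of_real (Re (A i i))"
  using arg_cong[OF psd_hermitian[OF assms assms(2)], of Im] by (simp add: complex_eq_iff)

lemma psdI:
  assumes "\<And>i j. i < n \<Longrightarrow> j < n \<Longrightarrow> A j i = cnj (A i j)" "\<And>v. 0 \<le> Re (qform n A v)"
  shows "psd n A"
  using assms unfolding psd_iff_qform hermitian_def by blast

lemma psd_qform_nonneg: "psd n A \<Longrightarrow> 0 \<le> Re (qform n A v)"
  by (simp add: psd_iff_qform)

lemma qform_diff: "qform n (\<lambda>i j. A i j - B i j) v = qform n A v - qform n B v"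
  by (simp add: qform_def sum_subtractf algebra_simps)

lemma qform_add: "qform n (\<lambda>i j. A i j + B i j) v = qform n A v + qform n B v"
  by (simp add: qform_def sum.distrib algebra_simps)

lemma qform_scale: "qform n (\<lambda>i j. c * A i j) v = c * qform n A v"
  by (simp add: qform_def sum_distrib_left algebra_simps)

lemma qform_sum: "qform n (\<lambda>i j. \<Sum>k\<in>K. f k i j) v = (\<Sum>k\<in>K. qform n (f k) v)"
  unfolding qform_def by (simp add: sum_distrib_left sum_distrib_right sum.swap[of _ K] mult_ac)

lemma qform_rank1:
  "qform n (\<lambda>i j. z i * cnj (z j)) v = (\<Sum>i<n. cnj (v i) * z i) * cnj (\<Sum>i<n. cnj (v i) * z i)"
  unfolding qform_def cnj_sum sum_product by (simp add: mult_ac)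

lemma qform_cong: "(\<And>i j. i < n \<Longrightarrow> j < n \<Longrightarrow> A i j = B i j) \<Longrightarrow> qform n A v = qform n B v"
  unfolding qform_def by (auto intro!: sum.cong)

lemma qform_unit_vector:
  assumes "i < n" shows "qform n A (\<lambda>j. if j = i then 1 else 0) = A i i"
proof -
  have "cnj (if a = i then 1 else 0) * A a b * (if b = i then 1 else 0)
      = (if b = i then if a = i then A a b else 0 else 0)" for a b
    by simp
  with assms show ?thesis by (simp add: qform_def)
qed

lemma Re_mult_cnj: "Re (s * cnj s) = (cmod s)\<^sup>2"
  by (simp add: complex_mult_cnj cmod_power2)

lemma psd_0 [simp]: "psd 0 A"
  by (rule psdI) (simp_all add: qform_def)

lemma psd_cong:
  assumes "psd n A" "\<And>i j. i < n \<Longrightarrow> j < n \<Longrightarrow> A i j = B i j"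
  shows "psd n B"
proof (rule psdI)
  fix i j assume "i < n" "j < n"
  then show "B j i = cnj (B i j)"
    using psd_hermitian[OF assms(1) \<open>i < n\<close> \<open>j < n\<close>] assms(2) by simp
qed (use assms qform_cong[of n A B] psd_qform_nonneg in metis)

lemma psd_add:
  assumes "psd n A" "psd n B"
  shows "psd n (\<lambda>i j. A i j + B i j)"
proof (rule psdI)
  fix i j assume "i < n" "j < n"
  then show "A j i + B j i = cnj (A i j + B i j)"
    using psd_hermitian[OF assms(1) \<open>i < n\<close> \<open>j < n\<close>] psd_hermitian[OF assms(2) \<open>i < n\<close> \<open>j < n\<close>]
    by simp
qed (use assms in \<open>simp add: qform_add psd_qform_nonneg add_nonneg_nonneg\<close>)

lemma psd_scale:
  assumes "psd n A" "0 \<le> c"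
  shows "psd n (\<lambda>i j. complex_of_real c * A i j)"
proof (rule psdI)
  fix i j assume "i < n" "j < n"
  then show "complex_of_real c * A j i = cnj (complex_of_real c * A i j)"
    using psd_hermitian[OF assms(1) \<open>i < n\<close> \<open>j < n\<close>] by simp
qed (use assms in \<open>simp add: qform_scale psd_qform_nonneg\<close>)

lemma psd_rank1: "psd n (\<lambda>i j. z i * cnj (z j))"
proof (rule psdI)
  show "0 \<le> Re (qform n (\<lambda>i j. z i * cnj (z j)) v)" for v
    unfolding qform_rank1 Re_mult_cnj by simp
qed simp

lemma psd_diag_nonneg:
  assumes "psd n A" "i < n"
  shows "0 \<le> Re (A i i)"
  using psd_qform_nonneg[OF assms(1), of "\<lambda>j. if j = i then 1 else 0"] qform_unit_vector[OF assms(2)]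
  by simp

lemma psd_le_dim:
  assumes "psd n A" "m \<le> n"
  shows "psd m A"
proof -
  have "0 \<le> Re (qform m A v)" for v
  proof -
    let ?w = "\<lambda>i. if i < m then v i else 0"
    have "qform n A ?w = (\<Sum>i<m. \<Sum>j<n. cnj (?w i) * A i j * ?w j)"
      unfolding qform_def using assms(2) by (intro sum.mono_neutral_right) auto
    also have "\<dots> = (\<Sum>i<m. \<Sum>j<m. cnj (?w i) * A i j * ?w j)"
      using assms(2) by (intro sum.cong refl sum.mono_neutral_right) auto
    finally have "qform m A v = qform n A ?w" by (simp add: qform_def)
    with psd_qform_nonneg[OF assms(1)] show ?thesis by simp
  qed
  moreover have "A j i = cnj (A i j)" if "i < m" "j < m" for i j
    using psd_hermitian[OF assms(1)] that assms(2) by (meson order_less_le_trans)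
  ultimately show ?thesis
    by (intro psdI)
qed

lemma psd_extend_zero:
  assumes "psd N A" "\<And>i. i \<le> N \<Longrightarrow> A i N = 0" "\<And>i. i \<le> N \<Longrightarrow> A N i = 0"
  shows "psd (Suc N) A"
proof -
  have "0 \<le> Re (qform (Suc N) A v)" for v
    using assms(2,3) psd_qform_nonneg[OF assms(1)] by (simp add: qform_def)
  moreover have "A j i = cnj (A i j)" if "i < Suc N" "j < Suc N" for i j
  proof (cases "i < N \<and> j < N")
    case True
    then show ?thesis using psd_hermitian[OF assms(1)] by blast
  next
    case False
    with that have "i = N \<or> j = N" by auto
    then show ?thesis using assms(2,3) that by auto
  qed
  ultimately show ?thesis
    by (intro psdI)
qed

lemma qform_add_unit:
  assumes "N < n"
  shows "qform n A (\<lambda>j. v j + (if j = N then \<alpha> else 0))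
       = qform n A v + \<alpha> * (\<Sum>i<n. cnj (v i) * A i N) + cnj \<alpha> * (\<Sum>j<n. A N j * v j)
         + cnj \<alpha> * \<alpha> * A N N"
proof -
  have "qform n A (\<lambda>j. v j + (if j = N then \<alpha> else 0)) =
     (\<Sum>i<n. \<Sum>j<n. cnj (v i) * A i j * v j + (if j = N then cnj (v i) * A i j * \<alpha> else 0)
        + (if i = N then cnj \<alpha> * A i j * v j else 0)
        + (if i = N then if j = N then cnj \<alpha> * A i j * \<alpha> else 0 else 0))"
    unfolding qform_def by (intro sum.cong refl) (auto simp: algebra_simps)
  also have "\<dots> = qform n A v + (\<Sum>i<n. cnj (v i) * A i N * \<alpha>) + (\<Sum>j<n. cnj \<alpha> * A N j * v j)
                   + cnj \<alpha> * A N N * \<alpha>"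
  proof -
    have sum_if: "(\<Sum>j\<in>S. if P then f j else 0) = (if P then sum f S else 0)" for P S and f :: "nat \<Rightarrow> complex"
      by simp
    show ?thesis
      unfolding sum.distrib sum_if using assms by (simp add: qform_def)
  qed
  finally show ?thesis by (simp add: sum_distrib_left sum_distrib_right algebra_simps)
qed

lemma psd_col_eq_0:
  assumes psd: "psd n A" and "N < n" "A N N = 0" "i < n"
  shows "A i N = 0"
proof (rule ccontr)
  define a where "a = A i N"
  assume "A i N \<noteq> 0"
  then have a0: "a \<noteq> 0" by (simp add: a_def)
  define e where "e j = (if j = i then 1 else 0::complex)" for j
  define t where "t = (\<bar>Re (A i i)\<bar> + 1) / (2 * (cmod a)\<^sup>2)"
  define \<alpha> where "\<alpha> = - complex_of_real t * cnj a"
  have "cnj (e k) * A k N = (if k = i then A k N else 0)" "A N k * e k = (if k = i then A N k else 0)" for k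
    by (simp_all add: e_def)
  then have "(\<Sum>k<n. cnj (e k) * A k N) = a" "(\<Sum>j<n. A N j * e j) = cnj a"
    using assms psd_hermitian[OF psd, of i N] by (simp_all add: a_def)
  then have "qform n A (\<lambda>j. e j + (if j = N then \<alpha> else 0)) = A i i + (\<alpha> * a + cnj \<alpha> * cnj a)"
    using qform_add_unit[of N n A e \<alpha>] qform_unit_vector[of i n A] assms
    by (simp add: e_def[abs_def])
  also have "\<alpha> * a + cnj \<alpha> * cnj a = - complex_of_real (2 * t * (cmod a)\<^sup>2)"
    by (simp add: \<alpha>_def algebra_simps flip: of_real_power complex_norm_square)
  also have "2 * t * (cmod a)\<^sup>2 = \<bar>Re (A i i)\<bar> + 1"
    using a0 by (simp add: t_def)
  finally have "Re (qform n A (\<lambda>j. e j + (if j = N then \<alpha> else 0))) = Re (A i i) - (\<bar>Re (A i i)\<bar> + 1)"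
    by simp
  with psd_qform_nonneg[OF psd] show False
    by (metis abs_ge_self add_le_same_cancel1 diff_ge_0_iff_ge not_one_le_zero order.trans)
qed

text \<open>One step of the Cholesky decomposition.\<close>
lemma psd_minus_rank1_last_col:
  assumes psd: "psd (Suc N) A" and dpos: "0 < Re (A N N)"
  defines "z \<equiv> \<lambda>i. A i N / complex_of_real (sqrt (Re (A N N)))"
  shows "psd (Suc N) (\<lambda>i j. A i j - z i * cnj (z j))"
    and "\<And>i. A i N = z i * cnj (z N)"
    and "\<And>i. i \<le> N \<Longrightarrow> A N i = z N * cnj (z i)"
proof -
  define d where "d = Re (A N N)"
  have AN: "A N N = complex_of_real d"
    using psd_diag_real[OF psd] unfolding d_def by simp
  have row: "A N i = cnj (A i N)" if "i \<le> N" for i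
    using psd_hermitian[OF psd, of i N] that by simp
  have zN: "z N = complex_of_real (sqrt d)"
    using dpos unfolding z_def d_def[symmetric] AN by (simp add: real_div_sqrt flip: of_real_divide)
  show col: "A i N = z i * cnj (z N)" for i
    using dpos unfolding zN by (simp add: z_def d_def)
  show "A N i = z N * cnj (z i)" if "i \<le> N" for i
    using col[of i] row[OF that] by simp
  have "0 \<le> Re (qform (Suc N) (\<lambda>i j. A i j - z i * cnj (z j)) v)" for v
  proof -
    define s where "s = (\<Sum>i<Suc N. cnj (v i) * A i N)"
    define \<alpha> where "\<alpha> = - cnj s / complex_of_real d"
    have "(\<Sum>j<Suc N. A N j * v j) = cnj s"
      unfolding s_def cnj_sum using row by (intro sum.cong) (auto simp: mult.commute)
    then have "qform (Suc N) A (\<lambda>j. v j + (if j = N then \<alpha> else 0))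
        = qform (Suc N) A v + (\<alpha> * s + cnj \<alpha> * cnj s + cnj \<alpha> * \<alpha> * complex_of_real d)"
      using qform_add_unit[of N "Suc N" A v \<alpha>] unfolding s_def[symmetric] AN by (simp add: algebra_simps)
    also have "\<alpha> * s + cnj \<alpha> * cnj s + cnj \<alpha> * \<alpha> * complex_of_real d = - (s * cnj s / complex_of_real d)"
      using dpos unfolding \<alpha>_def d_def by (simp add: field_simps)
    also have "s * cnj s / complex_of_real d = qform (Suc N) (\<lambda>i j. z i * cnj (z j)) v"
    proof -
      have "(\<Sum>i<Suc N. cnj (v i) * z i) = s / complex_of_real (sqrt d)"
        unfolding s_def z_def d_def sum_divide_distrib by (simp add: mult.assoc)
      moreover have "complex_of_real (sqrt d) * complex_of_real (sqrt d) = complex_of_real d"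
        using dpos by (simp add: d_def flip: of_real_mult)
      ultimately show ?thesis
        unfolding qform_rank1 by (simp add: field_simps)
    qed
    finally show ?thesis
      using psd_qform_nonneg[OF psd, of "\<lambda>j. v j + (if j = N then \<alpha> else 0)"]
      by (simp add: qform_diff)
  qed
  moreover have "A j i - z j * cnj (z i) = cnj (A i j - z i * cnj (z j))" if "i < Suc N" "j < Suc N" for i j
    using psd_hermitian[OF psd that] by simp
  ultimately show "psd (Suc N) (\<lambda>i j. A i j - z i * cnj (z j))"
    by (intro psdI)
qed

lemma psd_split_rank1:
  assumes psd: "psd (Suc N) A"
  obtains z where "psd (Suc N) (\<lambda>i j. A i j - z i * cnj (z j))"
    and "\<And>i. i \<le> N \<Longrightarrow> A i N = z i * cnj (z N)"
    and "\<And>i. i \<le> N \<Longrightarrow> A N i = z N * cnj (z i)"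
proof (cases "Re (A N N) = 0")
  case True
  then have "A N N = 0"
    using psd_diag_real[OF psd, of N] by simp
  then have col: "A i N = 0" if "i \<le> N" for i
    using psd_col_eq_0[OF psd _ \<open>A N N = 0\<close>, of i] that by simp
  have "A N i = 0" if "i \<le> N" for i
    using col[OF that] psd_hermitian[OF psd, of i N] that by simp
  with col psd show ?thesis
    by (intro that[of "\<lambda>_. 0"]) auto
next
  case False
  then have "0 < Re (A N N)"
    using psd_diag_nonneg[OF psd, of N] by simp
  from psd_minus_rank1_last_col[OF psd this] show ?thesis
    by (rule that)
qed

lemma psd_rank1_hadamard:
  assumes "psd n Q"
  shows "psd n (\<lambda>i j. z i * cnj (z j) * Q i j)"
proof -
  have "qform n (\<lambda>i j. z i * cnj (z j) * Q i j) v = qform n Q (\<lambda>j. cnj (z j) * v j)" for v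
    unfolding qform_def by (intro sum.cong refl) (simp add: mult_ac)
  then have "0 \<le> Re (qform n (\<lambda>i j. z i * cnj (z j) * Q i j) v)" for v
    using psd_qform_nonneg[OF assms] by simp
  moreover have "z j * cnj (z i) * Q j i = cnj (z i * cnj (z j) * Q i j)" if "i < n" "j < n" for i j
    using psd_hermitian[OF assms that] by simp
  ultimately show ?thesis
    by (intro psdI)
qed

lemma psd_hadamard: "psd n A \<Longrightarrow> psd n Q \<Longrightarrow> psd n (\<lambda>i j. A i j * Q i j)"
proof (induction n arbitrary: A Q)
  case (Suc N)
  obtain z where z: "psd (Suc N) (\<lambda>i j. A i j - z i * cnj (z j))"
    "\<And>i. i \<le> N \<Longrightarrow> A i N = z i * cnj (z N)" "\<And>i. i \<le> N \<Longrightarrow> A N i = z N * cnj (z i)"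
    using psd_split_rank1[OF Suc.prems(1)] by blast
  have "psd N (\<lambda>i j. (A i j - z i * cnj (z j)) * Q i j)"
    using Suc.IH psd_le_dim z(1) Suc.prems(2) by (meson le_SucI order_refl)
  then have "psd (Suc N) (\<lambda>i j. (A i j - z i * cnj (z j)) * Q i j)"
    by (rule psd_extend_zero) (simp_all add: z(2,3))
  from psd_add[OF this psd_rank1_hadamard[OF Suc.prems(2), of z]] show ?case
    by (rule psd_cong) (simp add: algebra_simps)
qed simp

lemma psd_hadamard_last_zero:
  assumes "psd (Suc N) B" "\<And>i. i \<le> N \<Longrightarrow> B i N = 0" "\<And>i. i \<le> N \<Longrightarrow> B N i = 0" "psd N Q"
  shows "psd (Suc N) (\<lambda>i j. B i j * Q i j)"
  using psd_hadamard[OF psd_le_dim[OF assms(1)] assms(4)]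
  by (rule psd_extend_zero) (simp_all add: assms(2,3))

section \<open>The rank-one case\<close>

definition poly_minus_power :: "(nat \<Rightarrow> real) \<Rightarrow> nat \<Rightarrow> nat \<Rightarrow> complex \<Rightarrow> complex" where
  "poly_minus_power c N M w = (\<Sum>k<N. complex_of_real (c k) * w ^ k) - w ^ M"

lemma qform_poly_minus_power_rank1:
  "qform n (\<lambda>i j. poly_minus_power c N M (z i * cnj (z j))) v
   = complex_of_real ((\<Sum>k<N. c k * (cmod (\<Sum>i<n. cnj (v i) * z i ^ k))\<^sup>2)
                      - (cmod (\<Sum>i<n. cnj (v i) * z i ^ M))\<^sup>2)"
proof -
  have "qform n (\<lambda>i j. (z i * cnj (z j)) ^ k) v = qform n (\<lambda>i j. z i ^ k * cnj (z j ^ k)) v" for k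
    by (simp add: power_mult_distrib)
  also have "\<dots> k = complex_of_real ((cmod (\<Sum>i<n. cnj (v i) * z i ^ k))\<^sup>2)" for k
    unfolding qform_rank1 complex_norm_square ..
  finally have "qform n (\<lambda>i j. (z i * cnj (z j)) ^ k) v
      = complex_of_real ((cmod (\<Sum>i<n. cnj (v i) * z i ^ k))\<^sup>2)" for k .
  then show ?thesis
    unfolding poly_minus_power_def qform_diff qform_sum qform_scale by simp
qed

lemma moment_power_eq_pow_mod_coeff:
  "(\<Sum>i<n. cnj (v i) * z i ^ M)
   = (\<Sum>k<n. pow_mod_coeff (map z [0..<n]) M k * (\<Sum>i<n. cnj (v i) * z i ^ k))"
proof -
  have "z i ^ M = (\<Sum>k<n. pow_mod_coeff (map z [0..<n]) M k * z i ^ k)" if "i < n" for i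
    using power_eq_pow_mod_coeff[of "z i" "map z [0..<n]" M] that by simp
  then have "(\<Sum>i<n. cnj (v i) * z i ^ M)
      = (\<Sum>i<n. \<Sum>k<n. pow_mod_coeff (map z [0..<n]) M k * (cnj (v i) * z i ^ k))"
    by (simp add: sum_distrib_left mult_ac)
  also have "\<dots> = (\<Sum>k<n. pow_mod_coeff (map z [0..<n]) M k * (\<Sum>i<n. cnj (v i) * z i ^ k))"
    by (subst sum.swap) (simp add: sum_distrib_left)
  finally show ?thesis .
qed

lemma Cconst_eq_pow_mod_coeff_replicate:
  assumes "1 \<le> n" "n \<le> M"
  shows "Cconst c M n (r\<^sup>2) = (\<Sum>k<n. (cmod (pow_mod_coeff (replicate n (complex_of_real r)) M k))\<^sup>2 / c k)"
  unfolding Cconst_def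
  by (intro sum.cong refl)
     (use assms in \<open>simp add: norm_pow_mod_coeff_replicate power_mult_distrib power_even_abs
                         mult.commute[of 2] flip: power_mult\<close>)

lemma weighted_cauchy_schwarz:
  fixes b g :: "nat \<Rightarrow> complex"
  assumes "\<forall>k<n. 0 < c k"
  shows "(cmod (\<Sum>k<n. b k * g k))\<^sup>2
         \<le> (\<Sum>k<n. (cmod (b k))\<^sup>2 / c k) * (\<Sum>k<n. c k * (cmod (g k))\<^sup>2)"
proof -
  have "cmod (\<Sum>k<n. b k * g k) \<le> (\<Sum>k<n. (cmod (b k) / sqrt (c k)) * (sqrt (c k) * cmod (g k)))"
    using assms by (auto intro!: order_trans[OF norm_sum] sum_mono simp: norm_mult)
  then have "(cmod (\<Sum>k<n. b k * g k))\<^sup>2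
      \<le> (\<Sum>k<n. (cmod (b k) / sqrt (c k)) * (sqrt (c k) * cmod (g k)))\<^sup>2"
    by (rule power_mono) simp
  also have "\<dots> \<le> (\<Sum>k<n. (cmod (b k) / sqrt (c k))\<^sup>2) * (\<Sum>k<n. (sqrt (c k) * cmod (g k))\<^sup>2)"
    by (rule Cauchy_Schwarz_ineq_sum)
  also have "\<dots> = (\<Sum>k<n. (cmod (b k))\<^sup>2 / c k) * (\<Sum>k<n. c k * (cmod (g k))\<^sup>2)"
    using assms by (auto intro!: arg_cong2[where f = "(*)"] sum.cong
                         simp: power_divide power_mult_distrib less_imp_le)
  finally show ?thesis .
qed

lemma hermitian_poly_minus_power:
  assumes "hermitian n A"
  shows "hermitian n (\<lambda>i j. poly_minus_power c N M (A i j))"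
  unfolding hermitian_def
proof (intro allI impI)
  fix i j assume "i < n" "j < n"
  with assms have "A j i = cnj (A i j)" unfolding hermitian_def by blast
  then show "poly_minus_power c N M (A j i) = cnj (poly_minus_power c N M (A i j))"
    by (simp add: poly_minus_power_def cnj_sum)
qed

lemma psd_poly_minus_power_rank1:
  assumes "1 \<le> n" "n \<le> M" "\<forall>k<n. 0 < c k" "\<forall>i<n. cmod (z i) \<le> r" "0 \<le> r"
    and "Cconst c M n (r\<^sup>2) \<le> 1"
  shows "psd n (\<lambda>i j. poly_minus_power c n M (z i * cnj (z j)))"
proof -
  let ?\<beta> = "pow_mod_coeff (map z [0..<n]) M"
  have "(cmod (?\<beta> k))\<^sup>2 / c k
        \<le> (cmod (pow_mod_coeff (replicate n (complex_of_real r)) M k))\<^sup>2 / c k" if "k < n" for k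
    using norm_pow_mod_coeff_le[of "map z [0..<n]" M k r] assms that
    by (intro divide_right_mono power_mono) auto
  then have "(\<Sum>k<n. (cmod (?\<beta> k))\<^sup>2 / c k) \<le> Cconst c M n (r\<^sup>2)"
    unfolding Cconst_eq_pow_mod_coeff_replicate[OF assms(1,2)] by (rule sum_mono) simp
  with assms(6) have S: "(\<Sum>k<n. (cmod (?\<beta> k))\<^sup>2 / c k) \<le> 1"
    by linarith
  have "0 \<le> Re (qform n (\<lambda>i j. poly_minus_power c n M (z i * cnj (z j))) v)" for v
  proof -
    define \<gamma> where "\<gamma> k = (\<Sum>i<n. cnj (v i) * z i ^ k)" for k
    define G where "G = (\<Sum>k<n. c k * (cmod (\<gamma> k))\<^sup>2)"
    have "0 \<le> G"
      unfolding G_def using assms(3) by (intro sum_nonneg mult_nonneg_nonneg) auto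
    have "(cmod (\<gamma> M))\<^sup>2 = (cmod (\<Sum>k<n. ?\<beta> k * \<gamma> k))\<^sup>2"
      unfolding \<gamma>_def moment_power_eq_pow_mod_coeff[of v z M] ..
    also have "\<dots> \<le> (\<Sum>k<n. (cmod (?\<beta> k))\<^sup>2 / c k) * G"
      unfolding G_def by (rule weighted_cauchy_schwarz[OF assms(3)])
    also have "\<dots> \<le> G"
      using mult_left_le[OF S \<open>0 \<le> G\<close>] by (simp add: mult.commute)
    finally show ?thesis
      by (simp add: qform_poly_minus_power_rank1 G_def \<gamma>_def)
  qed
  then show ?thesis
    unfolding psd_iff_qform
    using hermitian_poly_minus_power psd_rank1 psd_iff_qform by blast
qed

section \<open>The upper bound\<close>

lemma binomial_Suc_sq_ge:
  assumes "j \<le> m"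
  shows "real (m choose j) ^ 2 * (real (Suc m) / real (Suc j)) \<le> real (Suc m choose Suc j) ^ 2"
proof -
  define q where "q = real (Suc m) / real (Suc j)"
  have binom: "real (Suc m choose Suc j) = real (m choose j) * q"
    using Suc_times_binomial_eq[of m j] by (simp add: q_def field_simps flip: of_nat_mult)
  have "1 \<le> q"
    using assms by (simp add: q_def)
  then have "q * 1 \<le> q * q"
    by (intro mult_left_mono) auto
  then show ?thesis
    unfolding binom q_def[symmetric] power_mult_distrib
    by (intro mult_left_mono) (simp_all add: power2_eq_square)
qed

lemma Cconst_derivative_le:
  assumes "\<forall>j<Suc N. 0 < c j" "Suc N \<le> M" "0 \<le> \<rho>"
  shows "Cconst (\<lambda>j. real (Suc j) * c (Suc j) / real M) (M - 1) N \<rho> \<le> Cconst c M (Suc N) \<rho>"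
proof -
  obtain m where M: "M = Suc m" using assms(2) by (cases M) auto
  define T where "T k = real (M choose k) ^ 2 * real ((M - k - 1) choose (Suc N - k - 1)) ^ 2 * \<rho> ^ (M - k) / c k" for k
  have "Cconst (\<lambda>j. real (Suc j) * c (Suc j) / real M) (M - 1) N \<rho> \<le> (\<Sum>j<N. T (Suc j))"
    unfolding Cconst_def
  proof (rule sum_mono)
    fix j assume "j \<in> {..<N}"
    then have j: "j \<le> m" "0 < c (Suc j)" using assms by (auto simp: M)
    define X where "X = real ((m - j - 1) choose (N - j - 1)) ^ 2 * \<rho> ^ (m - j) / c (Suc j)"
    have "0 \<le> X" using j assms(3) by (simp add: X_def)
    have "real ((M - 1) choose j) ^ 2 * real ((M - 1 - j - 1) choose (N - j - 1)) ^ 2 * \<rho> ^ (M - 1 - j)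
          / (real (Suc j) * c (Suc j) / real M) = real (m choose j) ^ 2 * (real (Suc m) / real (Suc j)) * X"
      using j by (simp add: M X_def field_simps)
    also have "\<dots> \<le> real (Suc m choose Suc j) ^ 2 * X"
      using binomial_Suc_sq_ge[OF j(1)] \<open>0 \<le> X\<close> by (rule mult_right_mono)
    also have "\<dots> = T (Suc j)"
      by (simp add: T_def X_def M)
    finally show "real ((M - 1) choose j) ^ 2 * real ((M - 1 - j - 1) choose (N - j - 1)) ^ 2
        * \<rho> ^ (M - 1 - j) / (real (Suc j) * c (Suc j) / real M) \<le> T (Suc j)" .
  qed
  also have "\<dots> \<le> T 0 + (\<Sum>j<N. T (Suc j))"
  proof -
    have "0 < c 0" using assms(1) by blast
    with assms(3) have "0 \<le> T 0"
      unfolding T_def by (intro divide_nonneg_pos mult_nonneg_nonneg) auto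
    then show ?thesis by simp
  qed
  also have "\<dots> = Cconst c M (Suc N) \<rho>"
    unfolding Cconst_def T_def by (rule sum.lessThan_Suc_shift[symmetric])
  finally show ?thesis .
qed

lemma poly_minus_power_derivative:
  assumes "0 < M"
  shows "(poly_minus_power c (Suc N) M has_field_derivative
           of_nat M * poly_minus_power (\<lambda>j. real (Suc j) * c (Suc j) / real M) N (M - 1) w) (at w)"
proof -
  have "(\<Sum>k<Suc N. complex_of_real (c k) * (of_nat k * w ^ (k - 1)))
      = (\<Sum>j<N. complex_of_real (c (Suc j)) * (of_nat (Suc j) * w ^ j))"
    by (subst sum.lessThan_Suc_shift) simp
  also have "\<dots> = of_nat M * (\<Sum>j<N. complex_of_real (real (Suc j) * c (Suc j) / real M) * w ^ j)"
    unfolding sum_distrib_left using assms by (intro sum.cong refl) (simp add: field_simps)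
  finally have "(\<Sum>k<Suc N. complex_of_real (c k) * (of_nat k * w ^ (k - 1))) - of_nat M * w ^ (M - 1)
      = of_nat M * poly_minus_power (\<lambda>j. real (Suc j) * c (Suc j) / real M) N (M - 1) w"
    by (simp add: poly_minus_power_def right_diff_distrib)
  moreover have "(poly_minus_power c (Suc N) M has_field_derivative
          (\<Sum>k<Suc N. complex_of_real (c k) * (of_nat k * w ^ (k - 1))) - of_nat M * w ^ (M - 1)) (at w)"
    unfolding poly_minus_power_def[abs_def] by (auto intro!: derivative_eq_intros simp: mult_ac)
  ultimately show ?thesis by simp
qed

text \<open>For each \<open>v\<close>, the quadratic form of \<open>f(X + x B)\<close> is a real function of \<open>x\<close> whose
  derivative on \<open>[0, 1]\<close> is the quadratic form of the Hadamard product \<open>B \<circ> f'(X + x B)\<close>.\<close>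
lemma psd_along_segment:
  assumes deriv: "\<And>w. (f has_field_derivative f' w) (at w)"
    and start: "psd n (\<lambda>i j. f (X i j))"
    and herm: "hermitian n (\<lambda>i j. f (X i j + B i j))"
    and slope: "\<And>x. 0 \<le> x \<Longrightarrow> x \<le> 1 \<Longrightarrow> psd n (\<lambda>i j. B i j * f' (X i j + complex_of_real x * B i j))"
  shows "psd n (\<lambda>i j. f (X i j + B i j))"
proof -
  have "0 \<le> Re (qform n (\<lambda>i j. f (X i j + B i j)) v)" for v
  proof -
    define F where "F x = Re (qform n (\<lambda>i j. f (X i j + complex_of_real x * B i j)) v)" for x
    define F' where "F' x = Re (qform n (\<lambda>i j. B i j * f' (X i j + complex_of_real x * B i j)) v)" for x
    have "((\<lambda>w. qform n (\<lambda>i j. f (X i j + w * B i j)) v) has_field_derivative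
            qform n (\<lambda>i j. B i j * f' (X i j + w * B i j)) v) (at w)" for w
      unfolding qform_def
      by (auto intro!: derivative_eq_intros DERIV_chain2[OF deriv] simp: sum_distrib_left mult_ac)
    then have "(F has_real_derivative F' x) (at x)" for x
      unfolding F_def F'_def
      by (rule has_field_derivative_Re[OF has_vector_derivative_real_field, unfolded o_def])
    moreover have "0 \<le> F' x" if "0 \<le> x" "x \<le> 1" for x
      using psd_qform_nonneg[OF slope[OF that]] by (simp add: F'_def)
    ultimately have "F 0 \<le> F 1"
      by (intro DERIV_nonneg_imp_nondecreasing[of 0 1 F]) auto
    moreover have "0 \<le> F 0"
      using psd_qform_nonneg[OF start] by (simp add: F_def)
    ultimately show ?thesis by (simp add: F_def)
  qed
  with herm show ?thesis by (simp add: psd_iff_qform)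
qed

lemma PN_le_dim: "PN n \<rho> A \<Longrightarrow> m \<le> n \<Longrightarrow> PN m \<rho> A"
  unfolding PN_def using psd_le_dim by auto

lemma norm_le_sqrt_of_psd_minus_rank1:
  assumes "PN n \<rho> A" "psd n (\<lambda>i j. A i j - z i * cnj (z j))" "i < n"
  shows "cmod (z i) \<le> sqrt \<rho>"
proof -
  have "(cmod (z i))\<^sup>2 \<le> Re (A i i)"
    using psd_diag_nonneg[OF assms(2,3)] unfolding minus_complex.sel Re_mult_cnj by simp
  also have "\<dots> \<le> \<rho>"
    using assms(1,3) complex_Re_le_cmod[of "A i i"] unfolding PN_def by (meson order_trans)
  finally show ?thesis
    by (simp add: real_le_rsqrt)
qed

lemma PN_rank1_segment:
  assumes PN: "PN n \<rho> A" and psd: "psd n (\<lambda>i j. A i j - z i * cnj (z j))" and x: "0 \<le> x" "x \<le> 1"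
  shows "PN n \<rho> (\<lambda>i j. z i * cnj (z j) + complex_of_real x * (A i j - z i * cnj (z j)))"
  unfolding PN_def
proof (intro conjI allI impI)
  show "psd n (\<lambda>i j. z i * cnj (z j) + complex_of_real x * (A i j - z i * cnj (z j)))"
    using psd_add[OF psd_rank1 psd_scale[OF psd x(1)]] .
  fix i j assume ij: "i < n" "j < n"
  have "0 \<le> \<rho>"
    using PN ij by (auto simp: PN_def intro: order_trans[OF norm_ge_zero])
  have "cmod (z i * cnj (z j)) \<le> sqrt \<rho> * sqrt \<rho>"
    unfolding norm_mult complex_mod_cnj
    using norm_le_sqrt_of_psd_minus_rank1[OF PN psd] ij \<open>0 \<le> \<rho>\<close> by (intro mult_mono) auto
  also have "\<dots> = \<rho>"
    using \<open>0 \<le> \<rho>\<close> by simp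
  finally have zz: "cmod (z i * cnj (z j)) \<le> \<rho>" .
  have "z i * cnj (z j) + complex_of_real x * (A i j - z i * cnj (z j))
      = complex_of_real (1 - x) * (z i * cnj (z j)) + complex_of_real x * A i j"
    by (simp add: algebra_simps)
  also have "cmod \<dots> \<le> (1 - x) * \<rho> + x * \<rho>"
    using PN ij zz x
    by (intro order_trans[OF norm_triangle_ineq] add_mono)
       (auto simp: PN_def norm_mult intro!: mult_left_mono simp del: of_real_diff)
  finally show "cmod (z i * cnj (z j) + complex_of_real x * (A i j - z i * cnj (z j))) \<le> \<rho>"
    by (simp add: algebra_simps)
qed

theorem psd_poly_minus_power:
  assumes "N \<le> M" "\<forall>j<N. 0 < c j" "Cconst c M N \<rho> \<le> 1" "PN N \<rho> A"
  shows "psd N (\<lambda>i j. poly_minus_power c N M (A i j))"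
  using assms
proof (induction N arbitrary: M c A)
  case (Suc N)
  have psdA: "psd (Suc N) A" using Suc.prems(4) by (simp add: PN_def)
  obtain z where z: "psd (Suc N) (\<lambda>i j. A i j - z i * cnj (z j))"
    "\<And>i. i \<le> N \<Longrightarrow> A i N = z i * cnj (z N)" "\<And>i. i \<le> N \<Longrightarrow> A N i = z N * cnj (z i)"
    using psd_split_rank1[OF psdA] by blast
  define B where "B i j = A i j - z i * cnj (z j)" for i j
  define c' where "c' = (\<lambda>j. real (Suc j) * c (Suc j) / real M)"
  have "0 \<le> \<rho>"
    using Suc.prems(4) by (auto simp: PN_def intro: order_trans[OF norm_ge_zero])
  have "0 < M" using Suc.prems(1) by simp
  have z_le: "\<forall>i<Suc N. cmod (z i) \<le> sqrt \<rho>"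
    using norm_le_sqrt_of_psd_minus_rank1[OF Suc.prems(4) z(1)] by blast
  have "Cconst c' (M - 1) N \<rho> \<le> Cconst c M (Suc N) \<rho>"
    unfolding c'_def using Suc.prems(2,1) \<open>0 \<le> \<rho>\<close> by (rule Cconst_derivative_le)
  with Suc.prems(3) have "Cconst c' (M - 1) N \<rho> \<le> 1"
    by linarith
  then have IH: "psd N (\<lambda>i j. poly_minus_power c' N (M - 1) (X i j))" if "PN (Suc N) \<rho> X" for X
    using Suc.IH[of "M - 1" c' X] Suc.prems(1,2) PN_le_dim[OF that] \<open>0 < M\<close>
    by (simp add: c'_def)
  have "psd (Suc N) (\<lambda>i j. poly_minus_power c (Suc N) M (z i * cnj (z j) + B i j))"
  proof (rule psd_along_segment[where X = "\<lambda>i j. z i * cnj (z j)" and B = B])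
    show "(poly_minus_power c (Suc N) M has_field_derivative
           of_nat M * poly_minus_power c' N (M - 1) w) (at w)" for w
      unfolding c'_def using poly_minus_power_derivative[OF \<open>0 < M\<close>] .
    show "psd (Suc N) (\<lambda>i j. poly_minus_power c (Suc N) M (z i * cnj (z j)))"
      using psd_poly_minus_power_rank1[of "Suc N" M c z "sqrt \<rho>"] Suc.prems z_le \<open>0 \<le> \<rho>\<close> by simp
    show "hermitian (Suc N) (\<lambda>i j. poly_minus_power c (Suc N) M (z i * cnj (z j) + B i j))"
      using hermitian_poly_minus_power psdA by (simp add: B_def psd_def)
    fix x :: real assume "0 \<le> x" "x \<le> 1"
    then have "psd N (\<lambda>i j. poly_minus_power c' N (M - 1) (z i * cnj (z j) + complex_of_real x * B i j))"
      using IH PN_rank1_segment[OF Suc.prems(4) z(1)] by (simp add: B_def)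
    with z have "psd (Suc N) (\<lambda>i j. B i j * poly_minus_power c' N (M - 1) (z i * cnj (z j) + complex_of_real x * B i j))"
      unfolding B_def by (intro psd_hadamard_last_zero) simp_all
    from psd_scale[OF this, of "real M"]
    show "psd (Suc N) (\<lambda>i j. B i j * (of_nat M * poly_minus_power c' N (M - 1) (z i * cnj (z j) + complex_of_real x * B i j)))"
      by (simp add: mult_ac)
  qed
  then show ?case by (simp add: B_def)
qed simp

section \<open>Sharpness\<close>

lemma lagrange_basis_poly:
  fixes p :: "nat \<Rightarrow> 'a::field"
  assumes "inj_on p {..<n}" "i < n"
  shows "\<exists>L. degree L < n \<and> (\<forall>l<n. poly L (p l) = (if l = i then 1 else 0))"
proof (intro exI conjI allI impI)
  define L where "L = smult (1 / (\<Prod>j\<in>{..<n} - {i}. p i - p j)) (\<Prod>j\<in>{..<n} - {i}. [:- p j, 1:])"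
  have "degree (\<Prod>j\<in>{..<n} - {i}. [:- p j, 1:]) \<le> (\<Sum>j\<in>{..<n} - {i}. degree [:- p j, 1:])"
    using degree_prod_sum_le[of "{..<n} - {i}" "\<lambda>j. [:- p j, 1:]"] by (simp add: o_def)
  also have "\<dots> < n"
    using assms(2) by simp
  finally show "degree L < n"
    unfolding L_def by (rule le_less_trans[OF degree_smult_le])
  fix l assume "l < n"
  show "poly L (p l) = (if l = i then 1 else 0)"
  proof (cases "l = i")
    case True
    have "(\<Prod>j\<in>{..<n} - {i}. p i - p j) \<noteq> 0"
      using assms by (auto simp: inj_on_def)
    with True show ?thesis by (simp add: L_def poly_prod)
  next
    case False
    then have "(\<Prod>j\<in>{..<n} - {i}. poly [:- p j, 1:] (p l)) = 0"
      using \<open>l < n\<close> by (intro prod_zero) (auto intro!: bexI[of _ l])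
    with False show ?thesis by (simp add: L_def poly_prod)
  qed
qed

lemma poly_eq_0_if_distinct_roots:
  fixes P :: "'a::idom poly"
  assumes "inj_on p {..<n}" "degree P < n" "\<And>l. l < n \<Longrightarrow> poly P (p l) = 0"
  shows "P = 0"
proof (rule ccontr)
  assume "P \<noteq> 0"
  have "n = card (p ` {..<n})"
    using card_image[OF assms(1)] by simp
  also have "\<dots> \<le> card {x. poly P x = 0}"
    using assms(3) \<open>P \<noteq> 0\<close> by (intro card_mono poly_roots_finite) auto
  also have "\<dots> \<le> degree P"
    using card_poly_roots_bound[OF \<open>P \<noteq> 0\<close>] .
  finally show False using assms(2) by simp
qed

lemma vandermonde_solvable:
  fixes p g :: "nat \<Rightarrow> 'a::field"
  assumes inj: "inj_on p {..<n}"
  shows "\<exists>w. \<forall>m<n. (\<Sum>i<n. w i * p i ^ m) = g m"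
proof -
  have "\<forall>i\<in>{..<n}. \<exists>L. degree L < n \<and> (\<forall>l<n. poly L (p l) = (if l = i then 1 else 0))"
    by (intro ballI lagrange_basis_poly[OF inj]) simp
  then have "\<exists>L. \<forall>i\<in>{..<n}. degree (L i) < n \<and> (\<forall>l<n. poly (L i) (p l) = (if l = i then 1 else 0))"
    by (rule bchoice)
  then obtain L where "\<forall>i\<in>{..<n}. degree (L i) < n \<and> (\<forall>l<n. poly (L i) (p l) = (if l = i then 1 else 0))"
    by blast
  then have L: "\<And>i. i < n \<Longrightarrow> degree (L i) < n"
    "\<And>i l. i < n \<Longrightarrow> l < n \<Longrightarrow> poly (L i) (p l) = (if l = i then 1 else 0)"
    by auto
  have interp: "(\<Sum>i<n. smult (p i ^ m) (L i)) = monom 1 m" if "m < n" for m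
  proof -
    have "monom 1 m - (\<Sum>i<n. smult (p i ^ m) (L i)) = 0"
    proof (rule poly_eq_0_if_distinct_roots[OF inj])
      show "degree (monom 1 m - (\<Sum>i<n. smult (p i ^ m) (L i))) < n"
        using that L(1) by (intro degree_diff_less degree_sum_less) (auto simp: degree_monom_eq
            intro: le_less_trans[OF degree_smult_le])
      show "poly (monom 1 m - (\<Sum>i<n. smult (p i ^ m) (L i))) (p l) = 0" if "l < n" for l
      proof -
        have "(\<Sum>i<n. p i ^ m * poly (L i) (p l)) = (\<Sum>i<n. if i = l then p i ^ m else 0)"
          using that L(2) by (intro sum.cong) auto
        with that show ?thesis by (simp add: poly_sum poly_monom)
      qed
    qed
    then show ?thesis by simp
  qed
  define w where "w i = (\<Sum>k<n. g k * coeff (L i) k)" for i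
  have "(\<Sum>i<n. w i * p i ^ m) = g m" if "m < n" for m
  proof -
    have "(\<Sum>i<n. w i * p i ^ m) = (\<Sum>k<n. g k * coeff (\<Sum>i<n. smult (p i ^ m) (L i)) k)"
      unfolding w_def coeff_sum by (simp add: sum_distrib_left sum_distrib_right mult_ac) (rule sum.swap)
    also have "\<dots> = (\<Sum>k<n. if k = m then g k else 0)"
      using that by (intro sum.cong) (auto simp: interp coeff_monom)
    also have "\<dots> = g m"
      using that by simp
    finally show ?thesis .
  qed
  then show ?thesis by blast
qed

lemma rank1_qform_witness:
  fixes z :: "nat \<Rightarrow> complex" and M :: nat
  assumes inj: "inj_on z {..<n}" and c: "\<forall>k<n. 0 < c k"
  defines "S \<equiv> \<Sum>k<n. (cmod (pow_mod_coeff (map z [0..<n]) M k))\<^sup>2 / c k"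
  shows "\<exists>v. qform n (\<lambda>i j. poly_minus_power (\<lambda>k. t * c k) n M (z i * cnj (z j))) v
             = complex_of_real (t * S - S\<^sup>2)"
proof -
  let ?\<beta> = "pow_mod_coeff (map z [0..<n]) M"
  obtain w where w: "\<forall>m<n. (\<Sum>i<n. w i * z i ^ m) = cnj (?\<beta> m) / complex_of_real (c m)"
    using vandermonde_solvable[OF inj, of "\<lambda>m. cnj (?\<beta> m) / complex_of_real (c m)"] by blast
  define v where "v i = cnj (w i)" for i
  define \<gamma> where "\<gamma> k = (\<Sum>i<n. cnj (v i) * z i ^ k)" for k
  have \<gamma>: "\<gamma> k = cnj (?\<beta> k) / complex_of_real (c k)" if "k < n" for k
    using w that by (simp add: \<gamma>_def v_def)
  have "\<gamma> M = (\<Sum>k<n. ?\<beta> k * \<gamma> k)"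
    unfolding \<gamma>_def by (rule moment_power_eq_pow_mod_coeff)
  also have "\<dots> = complex_of_real S"
    unfolding S_def of_real_sum
    using c by (intro sum.cong refl) (simp add: \<gamma> complex_norm_square[unfolded of_real_power, symmetric])
  finally have \<gamma>M: "\<gamma> M = complex_of_real S" .
  have "(\<Sum>k<n. t * c k * (cmod (\<gamma> k))\<^sup>2) = t * S"
    unfolding S_def sum_distrib_left
    using c by (intro sum.cong refl) (simp add: \<gamma> norm_divide power_divide power2_eq_square)
  then have "qform n (\<lambda>i j. poly_minus_power (\<lambda>k. t * c k) n M (z i * cnj (z j))) v
      = complex_of_real (t * S - S\<^sup>2)"
    unfolding qform_poly_minus_power_rank1 \<gamma>_def[symmetric] \<gamma>M by simp
  then show ?thesis by blast
qed

lemma PN_rank1: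
  assumes "0 \<le> \<rho>" "\<forall>i<n. cmod (z i) \<le> sqrt \<rho>"
  shows "PN n \<rho> (\<lambda>i j. z i * cnj (z j))"
  unfolding PN_def
proof (intro conjI allI impI psd_rank1)
  fix i j assume "i < n" "j < n"
  then have "cmod (z i * cnj (z j)) \<le> sqrt \<rho> * sqrt \<rho>"
    unfolding norm_mult complex_mod_cnj using assms by (intro mult_mono) auto
  then show "cmod (z i * cnj (z j)) \<le> \<rho>"
    using assms(1) by simp
qed

lemma rank1_sharpness_bound:
  fixes M :: nat
  assumes H: "\<And>A. PN n \<rho> A \<Longrightarrow> psd n (\<lambda>i j. poly_minus_power (\<lambda>k. t * c k) n M (A i j))"
    and "0 \<le> \<rho>" "inj_on z {..<n}" "\<forall>i<n. cmod (z i) \<le> sqrt \<rho>" "\<forall>k<n. 0 < c k"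
  defines "S \<equiv> \<Sum>k<n. (cmod (pow_mod_coeff (map z [0..<n]) M k))\<^sup>2 / c k"
  shows "S\<^sup>2 \<le> t * S"
proof -
  obtain v where "qform n (\<lambda>i j. poly_minus_power (\<lambda>k. t * c k) n M (z i * cnj (z j))) v
      = complex_of_real (t * S - S\<^sup>2)"
    using rank1_qform_witness[OF assms(3,5), where M = M and t = t] unfolding S_def by blast
  with psd_qform_nonneg[OF H[OF PN_rank1[OF assms(2,4)]]] show ?thesis
    by (metis Re_complex_of_real diff_ge_0_iff_ge)
qed

lemma Cconst_pos:
  assumes "0 < \<rho>" "1 \<le> n" "n \<le> M" "\<forall>j<n. 0 < c j"
  shows "0 < Cconst c M n \<rho>"
proof -
  have "0 < real (M choose 0) ^ 2 * real ((M - 0 - 1) choose (n - 0 - 1)) ^ 2 * \<rho> ^ (M - 0) / c 0"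
    using assms by auto
  also have "\<dots> \<le> Cconst c M n \<rho>"
    unfolding Cconst_def using assms
    by (intro member_le_sum) (auto intro!: divide_nonneg_pos)
  finally show ?thesis .
qed

text \<open>The witnesses are \<open>u u\<^sup>*\<close> with \<open>u\<^sub>i = \<surd>\<rho> - \<epsilon> i\<close>, for \<open>\<epsilon> \<rightarrow> 0\<^sup>+\<close>.\<close>
lemma Cconst_le_if_psd_poly_minus_power:
  assumes "0 < \<rho>" "1 \<le> n" "n \<le> M" "\<forall>k<n. 0 < c k"
    and H: "\<And>A. PN n \<rho> A \<Longrightarrow> psd n (\<lambda>i j. poly_minus_power (\<lambda>k. t * c k) n M (A i j))"
  shows "Cconst c M n \<rho> \<le> t"
proof -
  define r where "r = sqrt \<rho>"
  have "0 < r" using assms(1) by (simp add: r_def)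
  define u where "u \<epsilon> i = complex_of_real (r - \<epsilon> * real i)" for \<epsilon> i
  define S where "S \<epsilon> = (\<Sum>k<n. (cmod (pow_mod_coeff (map (u \<epsilon>) [0..<n]) M k))\<^sup>2 / c k)" for \<epsilon>
  have "u 0 = (\<lambda>_. complex_of_real r)"
    by (simp add: u_def fun_eq_iff)
  then have "S 0 = Cconst c M n \<rho>"
    using Cconst_eq_pow_mod_coeff_replicate[OF assms(2,3), of c r] assms(1)
    by (simp add: S_def r_def map_replicate_const)
  have "isCont S 0"
    unfolding S_def u_def using assms(4)
    by (intro continuous_intros continuous_pow_mod_coeff) auto
  then have lim: "(S \<longlongrightarrow> S 0) (at_right 0)"
    unfolding isCont_def by (rule tendsto_mono[OF at_le, rotated]) simp
  have ev: "\<forall>\<^sub>F \<epsilon> in at_right 0. S \<epsilon> * S \<epsilon> \<le> t * S \<epsilon>"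
    unfolding eventually_at_right_field
  proof (intro exI[of _ "r / real n"] conjI allI impI)
    show "0 < r / real n" using \<open>0 < r\<close> assms(2) by simp
    fix \<epsilon> :: real assume "0 < \<epsilon>" "\<epsilon> < r / real n"
    have "inj_on (u \<epsilon>) {..<n}"
      unfolding inj_on_def u_def using \<open>0 < \<epsilon>\<close> by simp
    moreover have "cmod (u \<epsilon> i) \<le> sqrt \<rho>" if "i < n" for i
    proof -
      have "\<epsilon> * real i \<le> \<epsilon> * real n"
        using \<open>0 < \<epsilon>\<close> that by simp
      also have "\<dots> < r"
        using \<open>\<epsilon> < r / real n\<close> assms(2) by (simp add: field_simps)
      finally have "\<epsilon> * real i \<le> r" by simp
      with \<open>0 < \<epsilon>\<close> have "cmod (u \<epsilon> i) = r - \<epsilon> * real i"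
        by (simp add: u_def del: of_real_diff)
      with \<open>0 < \<epsilon>\<close> show ?thesis by (simp add: r_def)
    qed
    ultimately show "S \<epsilon> * S \<epsilon> \<le> t * S \<epsilon>"
      using rank1_sharpness_bound[OF H, where z = "u \<epsilon>"] assms(1,4)
      by (simp add: S_def power2_eq_square)
  qed
  have "S 0 * S 0 \<le> t * S 0"
    using tendsto_le[OF trivial_limit_at_right_real tendsto_mult[OF tendsto_const lim]
        tendsto_mult[OF lim lim] ev] .
  moreover have "0 < S 0"
    using Cconst_pos[OF assms(1-4)] \<open>S 0 = Cconst c M n \<rho>\<close> by simp
  ultimately show ?thesis
    using \<open>S 0 = Cconst c M n \<rho>\<close> by simp
qed

lemma loewner_le_hpow_rhs_iff:
  "loewner_le n (hpow A M) (rhs n c t A) \<longleftrightarrow> psd n (\<lambda>i j. poly_minus_power (\<lambda>k. t * c k) n M (A i j))"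
  unfolding loewner_le_def rhs_def hpow_def poly_minus_power_def
  by (simp add: sum_distrib_left mult.assoc)

lemma Cconst_scale: "Cconst (\<lambda>k. a * c k) M N \<rho> = Cconst c M N \<rho> / a"
  unfolding Cconst_def sum_divide_distrib by (simp add: field_simps)

theorem mainTheorem5:
  fixes \<rho> :: real and M N :: nat and c :: "nat \<Rightarrow> real"
  assumes "\<rho> > 0" and "1 \<le> N" and "N \<le> M" and "\<forall>j<N. c j > 0"
  shows "(\<forall>A. PN N \<rho> A \<longrightarrow> loewner_le N (hpow A M) (rhs N c (Cconst c M N \<rho>) A))
       \<and> (\<forall>t :: real. (\<forall>A. PN N \<rho> A \<longrightarrow> loewner_le N (hpow A M) (rhs N c t A))
              \<longrightarrow> Cconst c M N \<rho> \<le> t)"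
proof (intro conjI allI impI)
  fix A assume "PN N \<rho> A"
  define C where "C = Cconst c M N \<rho>"
  have "0 < C"
    unfolding C_def using Cconst_pos assms by blast
  then have "Cconst (\<lambda>k. C * c k) M N \<rho> \<le> 1" and "\<forall>j<N. 0 < C * c j"
    using assms(4) by (simp_all add: Cconst_scale C_def)
  with assms(3) \<open>PN N \<rho> A\<close> show "loewner_le N (hpow A M) (rhs N c C A)"
    unfolding loewner_le_hpow_rhs_iff by (intro psd_poly_minus_power)
next
  fix t assume "\<forall>A. PN N \<rho> A \<longrightarrow> loewner_le N (hpow A M) (rhs N c t A)"
  with assms show "Cconst c M N \<rho> \<le> t"
    by (intro Cconst_le_if_psd_poly_minus_power) (auto simp: loewner_le_hpow_rhs_iff)
qed

end
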